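(* Let $(b_1,\ldots,b_m,\alpha,\beta,\gamma)$ be a reduced Schubert problem with $\alpha\le\beta\le\gamma$ and $\alpha<\gamma$. Then $K(b_1,\ldots,b_m,\alpha,\beta+\gamma) < K(b_1,\ldots,b_m,\gamma,\beta+\alpha)$.
   Context: A Schubert problem is a finite list $a_\bullet=(a_1,\ldots,a_k)$ of positive integers with even sum; set $n(a_\bullet)=\frac12(a_1+\cdots+a_k+2)$. It is valid if $a_i\le n(a_\bullet)-1$ for all $i$, and reduced if it is valid and $a_i+a_j\le n(a_\bullet)-1$ for all $i<j$. For such a list, $K(a_\bullet)$ is the number of Young tableaux of shape $(n(a_\bullet)-1,n(a_\bullet)-1)$ and content $(a_1,\ldots,a_k)$: two-rowed arrays of integers, each row of length $n(a_\bullet)-1$, weakly increasing along rows, strictly increasing down columns, with exactly $a_i$ occurrences of $i$ for each $i$. *)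

theory Defs
  imports Main
begin

text \<open>A Schubert problem: a finite list of positive integers with even sum.
  Lists are 0-indexed in Isabelle; the entry a_i of the paper is a ! (i-1).\<close>

definition schubert_problem :: "nat list \<Rightarrow> bool" where
  "schubert_problem a \<longleftrightarrow> (\<forall>x\<in>set a. 0 < x) \<and> even (sum_list a)"

definition n_of :: "nat list \<Rightarrow> nat" where
  "n_of a = (sum_list a + 2) div 2"

definition valid :: "nat list \<Rightarrow> bool" where
  "valid a \<longleftrightarrow> schubert_problem a \<and> (\<forall>i<length a. a ! i \<le> n_of a - 1)"

definition reduced :: "nat list \<Rightarrow> bool" where
  "reduced a \<longleftrightarrow> valid a \<and>
     (\<forall>i j. i < j \<and> j < length a \<longrightarrow> a ! i + a ! j \<le> n_of a - 1)"

definition tableaux :: "nat list \<Rightarrow> (nat list \<times> nat list) set" where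
  "tableaux a = {(r1, r2).
     length r1 = n_of a - 1 \<and> length r2 = n_of a - 1 \<and>
     sorted r1 \<and> sorted r2 \<and>
     (\<forall>j < n_of a - 1. r1 ! j < r2 ! j) \<and>
     set (r1 @ r2) \<subseteq> {1..length a} \<and>
     (\<forall>i\<in>{1..length a}. count_list (r1 @ r2) i = a ! (i - 1))}"

definition K :: "nat list \<Rightarrow> nat" where
  "K a = card (tableaux a)"

end

theory Submission
  imports Defs
begin

text \<open>Deleting the entries k + 1 and k + 2 (k = length b) from a tableau of shape (N, N) and
  content b @ [x, y] leaves a two-row tableau of content b, and this is a bijection onto those
  two-row tableaux whose top row length l satisfies max (N - x, |b| + x - N) \<le> l \<le> N.
  For (x, y) = (\<alpha>, \<beta> + \<gamma>) the lower bound is N - \<alpha>, for (\<gamma>, \<beta> + \<alpha>) it is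
  max (N - \<gamma>, N - \<alpha> - \<beta>) < N - \<alpha>; so the first set lies in the second, and strictly:
  cutting the weakly increasing word of content b after position N - \<alpha> - 1 gives a tableau,
  because reducedness bounds every b_i by N - \<gamma>.\<close>

lemma count_list_replicate: "count_list (replicate n a) v = (if a = v then n else 0)"
  by (induct n) auto

lemma sorted_filter_le_append_filter_gt:
  fixes t :: nat
  assumes "sorted xs"
  shows "filter (\<lambda>v. v \<le> t) xs @ filter (\<lambda>v. \<not> v \<le> t) xs = xs"
  using assms
proof (induct xs)
  case (Cons a xs)
  show ?case
  proof (cases "a \<le> t")
    case False
    with Cons.prems have "\<forall>v\<in>set xs. \<not> v \<le> t"
      by auto
    with False show ?thesis
      by simp
  qed (use Cons in simp)
qed simp

lemma sorted_split_largest: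
  assumes "sorted xs" and "set xs \<subseteq> {..Suc k}"
  shows "xs = filter (\<lambda>v. v \<le> k) xs @ replicate (count_list xs (Suc k)) (Suc k)"
proof -
  have "filter (\<lambda>v. \<not> v \<le> k) xs = filter ((=) (Suc k)) xs"
    using assms(2) by (auto intro!: filter_cong)
  also have "\<dots> = replicate (count_list xs (Suc k)) (Suc k)"
    by (auto simp: count_list_eq_length_filter intro: replicate_length_same[symmetric])
  finally show ?thesis
    using sorted_filter_le_append_filter_gt[OF assms(1), of k] by simp
qed

lemma sorted_split_two_largest:
  assumes "sorted xs" and "set xs \<subseteq> {..Suc (Suc k)}"
  shows "xs = filter (\<lambda>v. v \<le> k) xs @ replicate (count_list xs (Suc k)) (Suc k)
                @ replicate (count_list xs (Suc (Suc k))) (Suc (Suc k))"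
proof -
  let ?ys = "filter (\<lambda>v. v \<le> Suc k) xs"
  have "count_list ?ys (Suc k) = count_list xs (Suc k)"
    by (induct xs) auto
  moreover have "filter (\<lambda>v. v \<le> k) ?ys = filter (\<lambda>v. v \<le> k) xs"
    by (auto intro: filter_cong)
  moreover have "sorted ?ys"
    using assms(1) sorted_filter[of id] by simp
  ultimately have "?ys = filter (\<lambda>v. v \<le> k) xs @ replicate (count_list xs (Suc k)) (Suc k)"
    using sorted_split_largest[of ?ys k] by auto
  then show ?thesis
    using sorted_split_largest[OF assms] by simp
qed

lemma sorted_nth_less_if_count_list_le:
  fixes w :: "nat list"
  assumes "sorted w" and "\<forall>v. count_list w v \<le> L" and "j + L < length w"
  shows "w ! j < w ! (j + L)"
proof (rule ccontr)
  assume "\<not> w ! j < w ! (j + L)"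
  then have "w ! j = w ! m" if "m \<in> {j..j + L}" for m
    using sorted_nth_mono[OF assms(1), of j m] sorted_nth_mono[OF assms(1), of m "j + L"]
      that assms(3) by simp
  then have "{j..j + L} \<subseteq> {i. i < length w \<and> w ! j = w ! i}"
    using assms(3) by force
  then have "card {j..j + L} \<le> card {i. i < length w \<and> w ! j = w ! i}"
    by (rule card_mono[rotated]) simp
  then have "Suc L \<le> count_list w (w ! j)"
    by (simp add: count_list_eq_length_filter length_filter_conv_card)
  with assms(2) show False
    using not_less_eq_eq by blast
qed

definition two_row_tableaux :: "nat list \<Rightarrow> (nat list \<times> nat list) set" where
  "two_row_tableaux c = {(r1, r2).
     sorted r1 \<and> sorted r2 \<and> length r2 \<le> length r1 \<and>
     (\<forall>j < length r2. r1 ! j < r2 ! j) \<and>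
     set (r1 @ r2) \<subseteq> {1..length c} \<and>
     (\<forall>i\<in>{1..length c}. count_list (r1 @ r2) i = c ! (i - 1))}"

fun block_word :: "nat \<Rightarrow> nat list \<Rightarrow> nat list" where
  "block_word i [] = []"
| "block_word i (b # c) = replicate b i @ block_word (Suc i) c"

lemma set_block_word: "set (block_word i c) \<subseteq> {i..<i + length c}"
  by (induct c arbitrary: i) fastforce+

lemma sorted_block_word: "sorted (block_word i c)"
proof (induct c arbitrary: i)
  case (Cons b c)
  then show ?case
    using set_block_word[of "Suc i" c] by (auto simp: sorted_append)
qed simp

lemma length_block_word: "length (block_word i c) = sum_list c"
  by (induct c arbitrary: i) auto

lemma count_list_block_word:
  "count_list (block_word i c) v = (if i \<le> v \<and> v < i + length c then c ! (v - i) else 0)"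
proof (induct c arbitrary: i)
  case (Cons b c)
  have "i \<notin> set (block_word (Suc i) c)"
    using set_block_word[of "Suc i" c] by auto
  with Cons[of "Suc i"] show ?case
    by (auto simp: count_list_replicate nth_Cons' Suc_diff_Suc)
qed simp

text \<open>Cutting the weakly increasing word of content c after position L gives a tableau,
  because no value repeats more than L times.\<close>

lemma two_row_tableau_with_top_length:
  assumes "\<forall>i<length c. c ! i \<le> L" and "L \<le> sum_list c" and "sum_list c \<le> 2 * L"
  shows "\<exists>s1 s2. (s1, s2) \<in> two_row_tableaux c \<and> length s1 = L \<and> length s2 = sum_list c - L"
proof -
  define w where "w = block_word 1 c"
  have sorted_w: "sorted w" and length_w: "length w = sum_list c"
    and set_w: "set w \<subseteq> {1..length c}"
    using sorted_block_word[of 1 c] length_block_word[of 1 c] set_block_word[of 1 c]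
    by (auto simp: w_def)
  have count_w: "count_list w v = (if 1 \<le> v \<and> v \<le> length c then c ! (v - 1) else 0)" for v
    unfolding w_def count_list_block_word by auto
  have "count_list w v \<le> L" for v
    using assms(1) count_w[of v] by (cases "1 \<le> v \<and> v \<le> length c") auto
  then have columns: "w ! j < w ! (L + j)" if "j < sum_list c - L" for j
    using sorted_nth_less_if_count_list_le[OF sorted_w, of L j] that length_w
    by (simp add: add.commute)
  have "(take L w, drop L w) \<in> two_row_tableaux c"
    unfolding two_row_tableaux_def mem_Collect_eq case_prod_conv append_take_drop_id
    using assms(2,3) sorted_w length_w set_w count_w columns
    by (simp add: sorted_wrt_take sorted_wrt_drop)
  moreover have "length (take L w) = L" "length (drop L w) = sum_list c - L"
    using assms(2) length_w by simp_all
  ultimately show ?thesis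
    by blast
qed

text \<open>A truncation is what remains of a tableau of content c @ [x, y] and shape (N, N) after
  deleting the entries k + 1 and k + 2, where k = length c; the conditions say exactly that the
  deleted boxes can be refilled by x entries k + 1 and y entries k + 2.\<close>

definition truncations :: "nat list \<Rightarrow> nat \<Rightarrow> nat \<Rightarrow> nat \<Rightarrow> (nat list \<times> nat list) set" where
  "truncations c N x y = {(s1, s2) \<in> two_row_tableaux c.
     length s1 \<le> N \<and> N \<le> x + length s1 \<and> x + length s2 \<le> N \<and>
     length s1 + length s2 + x + y = 2 * N}"

fun extend_truncation :: "nat \<Rightarrow> nat \<Rightarrow> nat \<Rightarrow> nat \<Rightarrow> nat list \<times> nat list \<Rightarrow> nat list \<times> nat list" where
  "extend_truncation k N x y (s1, s2) =
     (s1 @ replicate (N - length s1) (Suc k),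
      s2 @ replicate (x + length s1 - N) (Suc k) @ replicate y (Suc (Suc k)))"

definition truncate :: "nat \<Rightarrow> nat list \<times> nat list \<Rightarrow> nat list \<times> nat list" where
  "truncate k = map_prod (filter (\<lambda>v. v \<le> k)) (filter (\<lambda>v. v \<le> k))"

lemma n_of_append_pair: "2 * N = sum_list c + x + y \<Longrightarrow> n_of (c @ [x, y]) - 1 = N"
  unfolding n_of_def by simp

lemma extend_truncation_in_tableaux:
  assumes N: "2 * N = sum_list c + x + y" and p: "(s1, s2) \<in> truncations c N x y"
  shows "extend_truncation (length c) N x y (s1, s2) \<in> tableaux (c @ [x, y])"
proof -
  define k where "k = length c"
  note s = p[unfolded truncations_def two_row_tableaux_def, simplified]
  have set_s: "set s1 \<subseteq> {1..k}" "set s2 \<subseteq> {1..k}"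
    using s by (auto simp: k_def)
  obtain r1 r2 where r: "extend_truncation k N x y (s1, s2) = (r1, r2)"
    and r1: "r1 = s1 @ replicate (N - length s1) (Suc k)"
    and r2: "r2 = s2 @ replicate (x + length s1 - N) (Suc k) @ replicate y (Suc (Suc k))"
    by simp
  have length_r: "length r1 = N" "length r2 = N"
    using s by (auto simp: r1 r2)
  have "sorted r1" "sorted r2"
    using s set_s by (auto simp: r1 r2 sorted_append)
  moreover have "r1 ! j < r2 ! j" if "j < N" for j
  proof -
    \<comment> \<open>the bottom entry of column j comes from s2, is k + 1, or is k + 2\<close>
    consider "j < length s2" | "length s2 \<le> j" "j < x + length s2 + length s1 - N"
      | "x + length s2 + length s1 - N \<le> j"
      by linarith
    then show ?thesis
    proof cases
      case 1
      with s show ?thesis by (simp add: r1 r2 nth_append)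
    next
      case 2
      then have "j < length s1" using s by linarith
      moreover have "s1 ! j \<le> k" using \<open>j < length s1\<close> set_s by (auto dest: nth_mem)
      ultimately show ?thesis using 2 s by (simp add: r1 r2 nth_append)
    next
      case 3
      have "set r1 \<subseteq> {..Suc k}" using set_s by (auto simp: r1)
      then have "r1 ! j \<le> Suc k" using \<open>j < N\<close> length_r by (auto dest: nth_mem)
      moreover have "\<not> j < length s2" "\<not> j - length s2 < x + length s1 - N"
        "j - length s2 - (x + length s1 - N) < y"
        using 3 that s by linarith+
      ultimately show ?thesis by (simp add: r2 nth_append)
    qed
  qed
  moreover have "set (r1 @ r2) \<subseteq> {1..length (c @ [x, y])}"
    using set_s by (auto simp: r1 r2 k_def)
  moreover have "count_list (r1 @ r2) i = (c @ [x, y]) ! (i - 1)" if "i \<in> {1..k + 2}" for i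
  proof -
    have "Suc k \<notin> set s1" "Suc k \<notin> set s2" "Suc (Suc k) \<notin> set s1" "Suc (Suc k) \<notin> set s2"
      using set_s by auto
    moreover have "i \<le> k \<or> i = Suc k \<or> i = Suc (Suc k)"
      using that by auto
    ultimately show ?thesis
      using s that by (auto simp: r1 r2 k_def nth_append count_list_replicate)
  qed
  ultimately show ?thesis
    using r length_r unfolding tableaux_def n_of_append_pair[OF N] by (simp add: k_def)
qed

lemma truncate_extend_truncation:
  assumes "(s1, s2) \<in> truncations c N x y"
  shows "truncate (length c) (extend_truncation (length c) N x y (s1, s2)) = (s1, s2)"
proof -
  have "set s1 \<subseteq> {1..length c}" "set s2 \<subseteq> {1..length c}"
    using assms by (auto simp: truncations_def two_row_tableaux_def)
  then show ?thesis
    by (auto simp: truncate_def filter_replicate intro!: filter_True)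
qed

lemma tableau_rows_split:
  assumes "(r1, r2) \<in> tableaux (c @ [x, y])" and "k = length c"
  shows "r1 = filter (\<lambda>v. v \<le> k) r1 @ replicate (count_list r1 (Suc k)) (Suc k)"
    and "r2 = filter (\<lambda>v. v \<le> k) r2 @ replicate (count_list r2 (Suc k)) (Suc k)
                @ replicate y (Suc (Suc k))"
    and "count_list r1 (Suc k) + count_list r2 (Suc k) = x"
proof -
  note r = assms(1)[unfolded tableaux_def, simplified, folded assms(2)]
  have "r2 ! j \<le> Suc (Suc k)" if "j < length r2" for j
    using r nth_mem[OF that] by auto
  then have "r1 ! j \<le> Suc k" if "j < length r1" for j
    using r that by (metis less_Suc_eq_le order.strict_trans2)
  then have set_r1: "set r1 \<subseteq> {..Suc k}"
    by (auto simp: in_set_conv_nth)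
  then show "r1 = filter (\<lambda>v. v \<le> k) r1 @ replicate (count_list r1 (Suc k)) (Suc k)"
    using r by (intro sorted_split_largest) auto
  have count: "count_list r1 i + count_list r2 i = (c @ [x, y]) ! (i - 1)" if "i \<in> {1..k + 2}" for i
    using r that by auto
  from count[of "Suc k"] show "count_list r1 (Suc k) + count_list r2 (Suc k) = x"
    by (simp add: nth_append assms(2))
  have "count_list r1 (Suc (Suc k)) = 0"
    using set_r1 by (auto simp: count_list_0_iff)
  with count[of "Suc (Suc k)"] have "count_list r2 (Suc (Suc k)) = y"
    by (simp add: nth_append assms(2))
  moreover have "r2 = filter (\<lambda>v. v \<le> k) r2 @ replicate (count_list r2 (Suc k)) (Suc k)
      @ replicate (count_list r2 (Suc (Suc k))) (Suc (Suc k))"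
    using r by (intro sorted_split_two_largest) (auto simp: atMost_def)
  ultimately show "r2 = filter (\<lambda>v. v \<le> k) r2 @ replicate (count_list r2 (Suc k)) (Suc k)
      @ replicate y (Suc (Suc k))"
    by simp
qed

lemma extend_truncation_truncate:
  assumes "2 * N = sum_list c + x + y" and "t \<in> tableaux (c @ [x, y])"
  shows "extend_truncation (length c) N x y (truncate (length c) t) = t"
proof -
  obtain r1 r2 where t: "t = (r1, r2)"
    by fastforce
  note split = tableau_rows_split[OF assms(2)[unfolded t] refl]
  have "length r1 = N"
    using assms(2) unfolding t tableaux_def n_of_append_pair[OF assms(1)] by simp
  then have "N - length (filter (\<lambda>v. v \<le> length c) r1) = count_list r1 (Suc (length c))"
    "x + length (filter (\<lambda>v. v \<le> length c) r1) - N = count_list r2 (Suc (length c))"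
    using split(3) by (subst (asm) split(1); simp)+
  then show ?thesis
    using split(1,2) by (simp add: t truncate_def)
qed

lemma truncate_in_truncations:
  assumes N: "2 * N = sum_list c + x + y" and t: "(r1, r2) \<in> tableaux (c @ [x, y])"
  shows "truncate (length c) (r1, r2) \<in> truncations c N x y"
proof -
  define k where "k = length c"
  define s1 where "s1 = filter (\<lambda>v. v \<le> k) r1"
  define s2 where "s2 = filter (\<lambda>v. v \<le> k) r2"
  define a where "a = count_list r1 (Suc k)"
  define b where "b = count_list r2 (Suc k)"
  note r = t[unfolded tableaux_def n_of_append_pair[OF N], simplified, folded k_def]
  have r1: "r1 = s1 @ replicate a (Suc k)"
    and r2: "r2 = s2 @ replicate b (Suc k) @ replicate y (Suc (Suc k))"
    and ab: "a + b = x"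
    using tableau_rows_split[OF t k_def] by (simp_all add: s1_def s2_def a_def b_def)
  have set_s: "set s1 \<subseteq> {1..k}" "set s2 \<subseteq> {1..k}"
    using r by (auto simp: s1_def s2_def)
  have columns: "\<forall>j<N. r1 ! j < r2 ! j"
    using r by blast
  have length_r: "length s1 + a = N" "length s2 + b + y = N"
    using r by (simp_all add: r1 r2)
  have prefix: "length s2 + b \<le> length s1"
  proof (rule ccontr)
    assume "\<not> length s2 + b \<le> length s1"
    then have "0 < a" "length s1 < N"
      using length_r by linarith+
    moreover have "r1 ! length s1 = Suc k"
      using \<open>0 < a\<close> by (simp add: r1 nth_append)
    ultimately have "Suc k < r2 ! length s1"
      using columns by metis
    moreover have "r2 ! length s1 \<le> Suc k"
    proof (cases "length s1 < length s2")
      case True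
      then show ?thesis using set_s by (auto simp: r2 nth_append dest!: nth_mem)
    qed (use \<open>\<not> length s2 + b \<le> length s1\<close> in \<open>simp add: r2 nth_append\<close>)
    ultimately show False
      by simp
  qed
  have "s1 ! j < s2 ! j" if "j < length s2" for j
  proof -
    have "j < length s1" "j < N"
      using that prefix length_r by linarith+
    then show ?thesis
      using columns that by (auto simp: r1 r2 nth_append)
  qed
  moreover have "count_list (s1 @ s2) i = c ! (i - 1)" if "i \<in> {1..k}" for i
  proof -
    have "count_list (r1 @ r2) i = (c @ [x, y]) ! (i - 1)"
      using r that by auto
    moreover have "count_list (r1 @ r2) i = count_list (s1 @ s2) i"
      using that by (simp add: r1 r2 count_list_replicate)
    moreover have "i - 1 < length c"
      using that by (auto simp: k_def)
    ultimately show ?thesis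
      by (simp add: nth_append)
  qed
  moreover have "sorted s1" "sorted s2"
    using r by (simp_all add: s1_def s2_def sorted_wrt_filter)
  ultimately show ?thesis
    using set_s length_r prefix ab
    by (auto simp: truncate_def truncations_def two_row_tableaux_def s1_def s2_def k_def)
qed

lemma K_eq_card_truncations:
  assumes "2 * N = sum_list c + x + y"
  shows "K (c @ [x, y]) = card (truncations c N x y)"
proof -
  have "bij_betw (truncate (length c)) (tableaux (c @ [x, y])) (truncations c N x y)"
  proof (rule bij_betw_byWitness[where f' = "extend_truncation (length c) N x y"])
    show "\<forall>t\<in>tableaux (c @ [x, y]). extend_truncation (length c) N x y (truncate (length c) t) = t"
      using extend_truncation_truncate[OF assms] by blast
    show "\<forall>p\<in>truncations c N x y. truncate (length c) (extend_truncation (length c) N x y p) = p"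
      using truncate_extend_truncation by fast
    show "truncate (length c) ` tableaux (c @ [x, y]) \<subseteq> truncations c N x y"
      using truncate_in_truncations[OF assms] by auto
    show "extend_truncation (length c) N x y ` truncations c N x y \<subseteq> tableaux (c @ [x, y])"
      using extend_truncation_in_tableaux[OF assms] by (auto simp del: extend_truncation.simps)
  qed
  then show ?thesis
    unfolding K_def by (rule bij_betw_same_card)
qed

lemma finite_truncations: "finite (truncations c N x y)"
proof (rule finite_subset)
  let ?S = "{s. set s \<subseteq> {1..length c} \<and> length s \<le> N}"
  show "truncations c N x y \<subseteq> ?S \<times> ?S"
    by (auto simp: truncations_def two_row_tableaux_def)
  show "finite (?S \<times> ?S)"
    using finite_lists_length_le[of "{1..length c}" N] by simp
qed

lemma truncations_mono:
  assumes "x \<le> x'" and "x \<le> y'" and "x + y = x' + y'"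
  shows "truncations c N x y \<subseteq> truncations c N x' y'"
  using assms by (auto simp: truncations_def)

lemma reduced_last_three_bounds:
  assumes "reduced (bs @ [\<alpha>, \<beta>, \<gamma>])"
  defines "N \<equiv> n_of (bs @ [\<alpha>, \<beta>, \<gamma>]) - 1"
  shows "2 * N = sum_list bs + \<alpha> + \<beta> + \<gamma>" and "0 < \<beta>"
    and "\<alpha> + \<beta> \<le> N" and "\<beta> + \<gamma> \<le> N" and "\<forall>i<length bs. bs ! i + \<gamma> \<le> N"
proof -
  have valid: "(\<forall>v\<in>set (bs @ [\<alpha>, \<beta>, \<gamma>]). 0 < v) \<and> even (sum_list (bs @ [\<alpha>, \<beta>, \<gamma>]))"
    and pairs: "\<And>i j. i < j \<Longrightarrow> j < length bs + 3 \<Longrightarrow>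
      (bs @ [\<alpha>, \<beta>, \<gamma>]) ! i + (bs @ [\<alpha>, \<beta>, \<gamma>]) ! j \<le> N"
    using assms(1) by (auto simp: reduced_def valid_def schubert_problem_def N_def)
  from valid show "2 * N = sum_list bs + \<alpha> + \<beta> + \<gamma>" and "0 < \<beta>"
    by (auto simp: N_def n_of_def)
  show "\<alpha> + \<beta> \<le> N"
    using pairs[of "length bs" "Suc (length bs)"] by (simp add: nth_append)
  show "\<beta> + \<gamma> \<le> N"
    using pairs[of "Suc (length bs)" "Suc (Suc (length bs))"] by (simp add: nth_append)
  show "\<forall>i<length bs. bs ! i + \<gamma> \<le> N"
  proof (intro allI impI)
    fix i
    assume "i < length bs"
    then show "bs ! i + \<gamma> \<le> N"
      using pairs[of i "Suc (Suc (length bs))"] by (simp add: nth_append)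
  qed
qed

theorem lemma2p2:
  fixes bs :: "nat list" and \<alpha> \<beta> \<gamma> :: nat
  assumes "reduced (bs @ [\<alpha>, \<beta>, \<gamma>])"
    and "\<alpha> \<le> \<beta>" and "\<beta> \<le> \<gamma>" and "\<alpha> < \<gamma>"
  shows "K (bs @ [\<alpha>, \<beta> + \<gamma>]) < K (bs @ [\<gamma>, \<beta> + \<alpha>])"
proof -
  define N where "N = n_of (bs @ [\<alpha>, \<beta>, \<gamma>]) - 1"
  note bounds = reduced_last_three_bounds[OF assms(1), folded N_def]
  define L where "L = N - \<alpha> - 1"
  obtain s1 s2 where s: "(s1, s2) \<in> two_row_tableaux bs"
    and length_s: "length s1 = L" "length s2 = sum_list bs - L"
    using two_row_tableau_with_top_length[of bs L] bounds assms(4)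
    unfolding L_def by fastforce
  have "(s1, s2) \<in> truncations bs N \<gamma> (\<beta> + \<alpha>)"
    "(s1, s2) \<notin> truncations bs N \<alpha> (\<beta> + \<gamma>)"
    using s length_s bounds(1-4) assms(4) unfolding truncations_def L_def by auto
  moreover have "truncations bs N \<alpha> (\<beta> + \<gamma>) \<subseteq> truncations bs N \<gamma> (\<beta> + \<alpha>)"
    using assms(4) by (intro truncations_mono) auto
  ultimately have "card (truncations bs N \<alpha> (\<beta> + \<gamma>)) < card (truncations bs N \<gamma> (\<beta> + \<alpha>))"
    by (intro psubset_card_mono finite_truncations) blast
  moreover have "K (bs @ [\<alpha>, \<beta> + \<gamma>]) = card (truncations bs N \<alpha> (\<beta> + \<gamma>))"
    "K (bs @ [\<gamma>, \<beta> + \<alpha>]) = card (truncations bs N \<gamma> (\<beta> + \<alpha>))"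
    using bounds(1) by (simp_all add: K_eq_card_truncations)
  ultimately show ?thesis
    by simp
qed

end
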